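(* Let $\mathcal X$ be a Polish space with Borel $\sigma$-algebra and a $\sigma$-finite reference measure $\mathrm{d}x$, and let $\pi,\pi_Y$ be probability measures on $\mathcal X$ with densities (also denoted $\pi,\pi_Y$) such that $w=\pi/\pi_Y$ satisfies $|w|_\infty=\sup_{x}|w(x)|<\infty$. Let $\{Y_n\}_{n\ge 0}$ be any $\mathcal X$-valued stochastic process with $Y_0=y_0$, and for $n\ge1$ let $\hat\pi_{Y,n}=\frac1n\sum_{i=1}^n\delta_{Y_i}$ and \[ \hat\theta_n(\cdot)=\sum_{i=1}^n\frac{w(Y_i)}{\sum_{j=1}^n w(Y_j)}\delta_{Y_i}(\cdot),\qquad \eta_n(\cdot)=\mathbb E\,\hat\theta_n(\cdot). \] Then for all $n\ge1$, \[ \|\eta_n-\pi\|_{TV}\le B_n:=|w|_\infty\sup_{|f|\le1}\mathbb E\,\hat\pi_{Y,n}(\bar f)+2|w|_\infty^2\sup_{|f|\le1}\mathbb E\big(\hat\pi_{Y,n}(\bar f)\big)^2 . \]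
   Context: For a measurable $f:\mathcal X\to\mathbb R$, $\hat\pi_{Y,n}(\bar f):=\hat\pi_{Y,n}(f)-\pi_Y(f)$; suprema are over measurable $f$ with $|f|\le 1$. The total variation distance is $\|\mu-\nu\|_{TV}=\frac12\sup_{|f|\le1}|\mu(f)-\nu(f)|$. In the algorithm, $\eta_n$ is the conditional law of $X_{n+1}$ given that the resampling step is used at time $n+1$. *)

theory Defs
  imports "HOL-Probability.Probability"
begin

definition theta_hat :: "('a \<Rightarrow> real) \<Rightarrow> (nat \<Rightarrow> 'b \<Rightarrow> 'a) \<Rightarrow> nat \<Rightarrow> 'b \<Rightarrow> 'a set \<Rightarrow> real" where
  "theta_hat w Y n \<omega> A =
     (\<Sum>i=1..n. (w (Y i \<omega>) / (\<Sum>j=1..n. w (Y j \<omega>))) * indicator A (Y i \<omega>))"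

definition eta :: "'b measure \<Rightarrow> ('a::topological_space \<Rightarrow> real) \<Rightarrow> (nat \<Rightarrow> 'b \<Rightarrow> 'a) \<Rightarrow> nat \<Rightarrow> 'a measure" where
  "eta P w Y n = measure_of UNIV (sets borel) (\<lambda>A. \<integral>\<^sup>+\<omega>. ennreal (theta_hat w Y n \<omega> A) \<partial>P)"

text \<open>hat pi_{Y,n}(bar f) = hat pi_{Y,n}(f) - pi_Y(f).\<close>
definition emp_dev :: "'a measure \<Rightarrow> (nat \<Rightarrow> 'b \<Rightarrow> 'a) \<Rightarrow> nat \<Rightarrow> 'b \<Rightarrow> ('a \<Rightarrow> real) \<Rightarrow> real" where
  "emp_dev piY Y n \<omega> f = (1 / real n) * (\<Sum>i=1..n. f (Y i \<omega>)) - (\<integral>x. f x \<partial>piY)"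

definition unit_fns :: "'a measure \<Rightarrow> ('a \<Rightarrow> real) set" where
  "unit_fns M = {f \<in> borel_measurable M. \<forall>x\<in>space M. \<bar>f x\<bar> \<le> 1}"

definition tv_dist :: "'a measure \<Rightarrow> 'a measure \<Rightarrow> real" where
  "tv_dist M N = (1/2) * (SUP f \<in> unit_fns M. \<bar>(\<integral>x. f x \<partial>M) - (\<integral>x. f x \<partial>N)\<bar>)"

end

theory Submission
  imports Defs
begin

text \<open>
  Fix \<open>f\<close> with \<open>|f| \<le> 1\<close>, put \<open>c = \<pi>(f)\<close>, \<open>s = (1/n) \<Sum> w(Y\<^sub>i)\<close> and
  \<open>a = (1/n) \<Sum> w(Y\<^sub>i) (f(Y\<^sub>i) - c)\<close>, so that \<open>\<theta>\<^sub>n(f) - c = a / s\<close>.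
  Because \<open>\<pi>\<^sub>Y(w) = 1\<close> and \<open>\<pi>\<^sub>Y(w (f - c)) = 0\<close>, both \<open>a\<close> and \<open>s - 1\<close> are empirical
  deviations of test functions bounded by 1, rescaled by \<open>2|w|\<^sub>\<infinity>\<close> and \<open>|w|\<^sub>\<infinity>\<close>.
  Taking expectations in the exact expansion \<open>a/s = a - a (s - 1) + (a/s) (s - 1)\<^sup>2\<close>,
  the first term gives the first-order part of \<open>B\<^sub>n\<close>; the other two are bounded by second
  moments, using \<open>2|xy| \<le> x\<^sup>2 + y\<^sup>2\<close> and \<open>|a/s| \<le> 2\<close>. Finally \<open>\<eta>\<^sub>n(f) = E \<theta>\<^sub>n(f)\<close>
  because \<open>\<eta>\<^sub>n\<close> is the mixture of the random measures \<open>\<theta>\<^sub>n\<close>.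
  Neither the Polish structure, nor \<open>\<sigma>\<close>-finiteness, nor the value of \<open>Y\<^sub>0\<close> is needed.
\<close>

definition normalised_weight :: "('a \<Rightarrow> real) \<Rightarrow> (nat \<Rightarrow> 'b \<Rightarrow> 'a) \<Rightarrow> nat \<Rightarrow> 'b \<Rightarrow> nat \<Rightarrow> real" where
  "normalised_weight w Y n \<omega> i = w (Y i \<omega>) / (\<Sum>j=1..n. w (Y j \<omega>))"

lemma normalised_weight_nonneg:
  "(\<And>x. 0 \<le> w x) \<Longrightarrow> 0 \<le> normalised_weight w Y n \<omega> i"
  unfolding normalised_weight_def by (simp add: sum_nonneg)

lemma sum_normalised_weight_le_1:
  assumes "\<And>x. 0 \<le> w x"
  shows "(\<Sum>i=1..n. normalised_weight w Y n \<omega> i) \<le> 1"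
  unfolding normalised_weight_def sum_divide_distrib[symmetric]
  by (cases "(\<Sum>j=1..n. w (Y j \<omega>)) = 0") (auto simp: assms)

lemma abs_weighted_average_le_1:
  fixes f w :: "'a \<Rightarrow> real"
  assumes "\<And>x. 0 \<le> w x" "\<And>x. \<bar>f x\<bar> \<le> 1"
  shows "\<bar>\<Sum>i=1..n. normalised_weight w Y n \<omega> i * f (Y i \<omega>)\<bar> \<le> 1"
proof -
  have "\<bar>\<Sum>i=1..n. normalised_weight w Y n \<omega> i * f (Y i \<omega>)\<bar>
      \<le> (\<Sum>i=1..n. normalised_weight w Y n \<omega> i * \<bar>f (Y i \<omega>)\<bar>)"
    by (rule order_trans[OF sum_abs]) (simp add: abs_mult normalised_weight_nonneg assms)
  also have "\<dots> \<le> (\<Sum>i=1..n. normalised_weight w Y n \<omega> i)"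
    by (intro sum_mono mult_right_le_one_le normalised_weight_nonneg) (auto simp: assms)
  also have "\<dots> \<le> 1" by (rule sum_normalised_weight_le_1[OF assms(1)])
  finally show ?thesis .
qed

definition weighted_empirical :: "('a::topological_space \<Rightarrow> real) \<Rightarrow> (nat \<Rightarrow> 'b \<Rightarrow> 'a) \<Rightarrow> nat \<Rightarrow> 'b \<Rightarrow> 'a measure" where
  "weighted_empirical w Y n \<omega> =
     distr (density (count_space {1..n}) (\<lambda>i. ennreal (normalised_weight w Y n \<omega> i))) borel (\<lambda>i. Y i \<omega>)"

lemma sets_weighted_empirical [simp]: "sets (weighted_empirical w Y n \<omega>) = sets borel"
  by (simp add: weighted_empirical_def)

lemma emeasure_weighted_empirical:
  assumes "\<And>x. 0 \<le> w x" "A \<in> sets borel"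
  shows "emeasure (weighted_empirical w Y n \<omega>) A = ennreal (theta_hat w Y n \<omega> A)"
proof -
  have "emeasure (weighted_empirical w Y n \<omega>) A
      = (\<Sum>i=1..n. ennreal (normalised_weight w Y n \<omega> i) * indicator ((\<lambda>i. Y i \<omega>) -` A \<inter> {1..n}) i)"
    using assms(2) by (simp add: weighted_empirical_def emeasure_distr emeasure_density
        nn_integral_count_space_finite)
  also have "\<dots> = (\<Sum>i=1..n. ennreal (normalised_weight w Y n \<omega> i * indicator A (Y i \<omega>)))"
    by (intro sum.cong) (auto simp: indicator_def)
  also have "\<dots> = ennreal (\<Sum>i=1..n. normalised_weight w Y n \<omega> i * indicator A (Y i \<omega>))"
    by (rule sum_ennreal) (simp add: normalised_weight_nonneg assms(1))
  also have "\<dots> = ennreal (theta_hat w Y n \<omega> A)"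
    by (simp add: theta_hat_def normalised_weight_def)
  finally show ?thesis .
qed

lemma subprob_space_weighted_empirical:
  assumes "\<And>x. 0 \<le> w x"
  shows "subprob_space (weighted_empirical w Y n \<omega>)"
proof (rule subprob_spaceI)
  have "emeasure (weighted_empirical w Y n \<omega>) UNIV = ennreal (theta_hat w Y n \<omega> UNIV)"
    using assms by (simp add: emeasure_weighted_empirical)
  also have "\<dots> \<le> 1"
    using sum_normalised_weight_le_1[OF assms, where Y=Y and n=n and \<omega>=\<omega>]
    by (simp add: theta_hat_def normalised_weight_def)
  finally show "emeasure (weighted_empirical w Y n \<omega>) (space (weighted_empirical w Y n \<omega>)) \<le> 1"
    by (simp add: weighted_empirical_def)
qed (simp add: weighted_empirical_def)

lemma measurable_weighted_empirical:
  fixes w :: "'a::topological_space \<Rightarrow> real"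
  assumes "\<And>i. Y i \<in> measurable P borel" "w \<in> borel_measurable borel" "\<And>x. 0 \<le> w x"
  shows "weighted_empirical w Y n \<in> measurable P (subprob_algebra borel)"
proof (rule measurable_subprob_algebra)
  fix A :: "'a set" assume "A \<in> sets borel"
  moreover have "(\<lambda>\<omega>. theta_hat w Y n \<omega> A) \<in> borel_measurable P"
    unfolding theta_hat_def using assms \<open>A \<in> sets borel\<close> by measurable
  ultimately show "(\<lambda>\<omega>. emeasure (weighted_empirical w Y n \<omega>) A) \<in> borel_measurable P"
    by (simp add: emeasure_weighted_empirical assms(3))
qed (simp_all add: subprob_space_weighted_empirical assms)

lemma sets_eta [simp]: "sets (eta P w Y n) = sets borel"
  using sets.sigma_sets_eq[of borel] by (simp add: eta_def)

lemma space_eta [simp]: "space (eta P w Y n) = UNIV"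
  by (simp add: eta_def)

lemma eta_eq_bind:
  fixes w :: "'a::topological_space \<Rightarrow> real"
  assumes "prob_space P" "\<And>i. Y i \<in> measurable P borel" "w \<in> borel_measurable borel" "\<And>x. 0 \<le> w x"
  shows "eta P w Y n = bind P (weighted_empirical w Y n)"
proof -
  let ?B = "bind P (weighted_empirical w Y n)"
  have nonempty: "space P \<noteq> {}"
    using assms(1) prob_space.not_empty by blast
  have "eta P w Y n = measure_of UNIV (sets borel) (emeasure ?B)"
    unfolding eta_def
  proof (rule measure_of_eq)
    fix A :: "'a set" assume "A \<in> sigma_sets UNIV (sets borel)"
    then have "A \<in> sets borel"
      by (metis sets.sigma_sets_eq space_borel)
    then show "(\<integral>\<^sup>+\<omega>. ennreal (theta_hat w Y n \<omega> A) \<partial>P) = emeasure ?B A"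
      by (simp add: emeasure_bind[OF nonempty measurable_weighted_empirical[OF assms(2-4)]]
          emeasure_weighted_empirical assms(4))
  qed simp
  also have "\<dots> = ?B"
    using measure_of_of_measure[of ?B] nonempty by simp
  finally show ?thesis .
qed

lemma integral_weighted_empirical:
  fixes w f :: "'a::topological_space \<Rightarrow> real"
  assumes "\<And>x. 0 \<le> w x" "f \<in> borel_measurable borel"
  shows "(\<integral>x. f x \<partial>weighted_empirical w Y n \<omega>) = (\<Sum>i=1..n. normalised_weight w Y n \<omega> i * f (Y i \<omega>))"
  unfolding weighted_empirical_def using assms
  by (simp add: integral_distr integral_density normalised_weight_nonneg lebesgue_integral_count_space_finite)

lemma integral_eta:
  fixes w f :: "'a::topological_space \<Rightarrow> real"
  assumes "prob_space P" "\<And>i. Y i \<in> measurable P borel" "w \<in> borel_measurable borel" "\<And>x. 0 \<le> w x"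
    and "f \<in> borel_measurable borel" "\<And>x. \<bar>f x\<bar> \<le> B"
  shows "(\<integral>x. f x \<partial>eta P w Y n) = (\<integral>\<omega>. (\<Sum>i=1..n. normalised_weight w Y n \<omega> i * f (Y i \<omega>)) \<partial>P)"
proof -
  have "(\<integral>x. f x \<partial>eta P w Y n) = (\<integral>\<omega>. (\<integral>x. f x \<partial>weighted_empirical w Y n \<omega>) \<partial>P)"
    unfolding eta_eq_bind[OF assms(1-4)]
    using assms measurable_weighted_empirical[OF assms(2-4)]
    by (intro integral_bind[where B=B and B'=1 and K=borel])
      (auto simp: prob_space_imp_subprob_space subprob_space.subprob_emeasure_le_1
        subprob_space_weighted_empirical prob_space.finite_measure)
  then show ?thesis
    using assms(4,5) by (simp add: integral_weighted_empirical)
qed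

lemma integral_eta_minus_const:
  fixes w f :: "'a::topological_space \<Rightarrow> real"
  assumes "prob_space P" "\<And>i. Y i \<in> measurable P borel" "w \<in> borel_measurable borel" "\<And>x. 0 \<le> w x"
    and "f \<in> borel_measurable borel" "\<And>x. \<bar>f x\<bar> \<le> 1"
  shows "(\<integral>x. f x \<partial>eta P w Y n) - c = (\<integral>\<omega>. (\<Sum>i=1..n. normalised_weight w Y n \<omega> i * f (Y i \<omega>)) - c \<partial>P)"
proof -
  interpret P: prob_space P by fact
  have "(\<lambda>\<omega>. \<Sum>i=1..n. normalised_weight w Y n \<omega> i * f (Y i \<omega>)) \<in> borel_measurable P"
    unfolding normalised_weight_def using assms(2,3,5) by measurable
  moreover have "\<bar>\<Sum>i=1..n. normalised_weight w Y n \<omega> i * f (Y i \<omega>)\<bar> \<le> 1" for \<omega>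
    by (rule abs_weighted_average_le_1) (simp_all add: assms(4,6))
  ultimately have "integrable P (\<lambda>\<omega>. \<Sum>i=1..n. normalised_weight w Y n \<omega> i * f (Y i \<omega>))"
    by (intro P.integrable_const_bound[where B=1]) auto
  then show ?thesis
    using integral_eta[where Y=Y and n=n and w=w, OF assms] by (simp add: P.prob_space)
qed

lemma abs_integral_le_integral:
  fixes f g :: "'a \<Rightarrow> real"
  assumes "integrable M f" "integrable M g" "\<And>x. x \<in> space M \<Longrightarrow> \<bar>f x\<bar> \<le> g x"
  shows "\<bar>\<integral>x. f x \<partial>M\<bar> \<le> (\<integral>x. g x \<partial>M)"
proof -
  have "\<bar>\<integral>x. f x \<partial>M\<bar> \<le> (\<integral>x. \<bar>f x\<bar> \<partial>M)"
    using integral_norm_bound[of M f] unfolding real_norm_def .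
  also have "\<dots> \<le> (\<integral>x. g x \<partial>M)"
    using assms by (intro integral_mono) auto
  finally show ?thesis .
qed

lemma (in prob_space) abs_integral_le_const:
  fixes f :: "'a \<Rightarrow> real"
  assumes "f \<in> borel_measurable M" "\<And>x. x \<in> space M \<Longrightarrow> \<bar>f x\<bar> \<le> B"
  shows "\<bar>\<integral>x. f x \<partial>M\<bar> \<le> B"
  using abs_integral_le_integral[of M f "\<lambda>_. B"] assms
  by (simp add: integrable_const_bound[where B=B] prob_space)

lemma (in prob_space) integral_le_SUP_of_bounded:
  fixes X :: "'c \<Rightarrow> 'a \<Rightarrow> real"
  assumes "t \<in> T" "\<And>t. t \<in> T \<Longrightarrow> X t \<in> borel_measurable M"
    and "\<And>t x. t \<in> T \<Longrightarrow> x \<in> space M \<Longrightarrow> \<bar>X t x\<bar> \<le> B"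
  shows "(\<integral>x. X t x \<partial>M) \<le> (SUP t\<in>T. \<integral>x. X t x \<partial>M)"
proof (rule cSUP_upper[OF assms(1)])
  have "(\<integral>x. X t x \<partial>M) \<le> B" if "t \<in> T" for t
    using abs_integral_le_const[OF assms(2,3)[OF that]] by linarith
  then show "bdd_above ((\<lambda>t. \<integral>x. X t x \<partial>M) ` T)"
    by (rule bdd_aboveI2)
qed

lemma abs_emp_dev_le_2:
  assumes "prob_space \<pi>Y" "f \<in> unit_fns \<pi>Y" "\<And>i. Y i \<omega> \<in> space \<pi>Y"
  shows "\<bar>emp_dev \<pi>Y Y n \<omega> f\<bar> \<le> 2"
proof -
  have f: "f \<in> borel_measurable \<pi>Y" "\<And>x. x \<in> space \<pi>Y \<Longrightarrow> \<bar>f x\<bar> \<le> 1"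
    using assms(2) by (auto simp: unit_fns_def)
  have "\<bar>\<Sum>i=1..n. f (Y i \<omega>)\<bar> \<le> (\<Sum>i=1..n. \<bar>f (Y i \<omega>)\<bar>)"
    by (rule sum_abs)
  also have "\<dots> \<le> real n"
    using sum_mono[of "{1..n}" "\<lambda>i. \<bar>f (Y i \<omega>)\<bar>" "\<lambda>_. 1"] f(2) assms(3) by simp
  finally have "\<bar>\<Sum>i=1..n. f (Y i \<omega>)\<bar> \<le> real n" .
  then have "\<bar>(1 / real n) * (\<Sum>i=1..n. f (Y i \<omega>))\<bar> \<le> 1"
    by (cases "n = 0") (simp_all add: abs_mult divide_le_eq)
  moreover have "\<bar>\<integral>x. f x \<partial>\<pi>Y\<bar> \<le> 1"
    using prob_space.abs_integral_le_const[OF assms(1) f] .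
  ultimately show ?thesis
    unfolding emp_dev_def by linarith
qed

lemma measurable_emp_dev:
  assumes "\<And>i. Y i \<in> measurable P borel" "f \<in> borel_measurable borel"
  shows "(\<lambda>\<omega>. emp_dev \<pi>Y Y n \<omega> f) \<in> borel_measurable P"
  unfolding emp_dev_def using assms by measurable

lemma emp_dev_uminus: "emp_dev \<pi>Y Y n \<omega> (\<lambda>x. - f x) = - emp_dev \<pi>Y Y n \<omega> f"
  by (simp add: emp_dev_def sum_negf)

lemma
  assumes "prob_space P" "prob_space \<pi>Y" "sets \<pi>Y = sets borel"
    and "\<And>i. Y i \<in> measurable P borel" "f \<in> unit_fns \<pi>Y"
  shows integral_emp_dev_le_SUP:
      "(\<integral>\<omega>. emp_dev \<pi>Y Y n \<omega> f \<partial>P) \<le> (SUP g\<in>unit_fns \<pi>Y. \<integral>\<omega>. emp_dev \<pi>Y Y n \<omega> g \<partial>P)"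
    and integral_emp_dev_sq_le_SUP:
      "(\<integral>\<omega>. (emp_dev \<pi>Y Y n \<omega> f)\<^sup>2 \<partial>P) \<le> (SUP g\<in>unit_fns \<pi>Y. \<integral>\<omega>. (emp_dev \<pi>Y Y n \<omega> g)\<^sup>2 \<partial>P)"
proof -
  have space: "space \<pi>Y = UNIV"
    using sets_eq_imp_space_eq[OF assms(3)] by simp
  have measurable: "(\<lambda>\<omega>. emp_dev \<pi>Y Y n \<omega> g) \<in> borel_measurable P" if "g \<in> unit_fns \<pi>Y" for g
    using that assms(4)
    by (intro measurable_emp_dev) (simp_all add: unit_fns_def measurable_cong_sets[OF assms(3) refl])
  have bound: "\<bar>emp_dev \<pi>Y Y n \<omega> g\<bar> \<le> 2" if "g \<in> unit_fns \<pi>Y" for g \<omega>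
    using abs_emp_dev_le_2[OF assms(2) that] space by simp
  have bound_sq: "\<bar>(emp_dev \<pi>Y Y n \<omega> g)\<^sup>2\<bar> \<le> 4" if "g \<in> unit_fns \<pi>Y" for g \<omega>
    using bound[OF that, of \<omega>] power_mono[of "\<bar>emp_dev \<pi>Y Y n \<omega> g\<bar>" 2 2] by simp
  show "(\<integral>\<omega>. emp_dev \<pi>Y Y n \<omega> f \<partial>P) \<le> (SUP g\<in>unit_fns \<pi>Y. \<integral>\<omega>. emp_dev \<pi>Y Y n \<omega> g \<partial>P)"
    using assms(5) measurable bound by (intro prob_space.integral_le_SUP_of_bounded[OF assms(1)])
  show "(\<integral>\<omega>. (emp_dev \<pi>Y Y n \<omega> f)\<^sup>2 \<partial>P) \<le> (SUP g\<in>unit_fns \<pi>Y. \<integral>\<omega>. (emp_dev \<pi>Y Y n \<omega> g)\<^sup>2 \<partial>P)"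
    using assms(5) measurable bound_sq by (intro prob_space.integral_le_SUP_of_bounded[OF assms(1)]) auto
qed

lemma ratio_expansion:
  fixes a s N :: real
  assumes "s \<noteq> 0" "N \<noteq> 0"
  shows "a / s = a / N - (a / N) * (s / N - 1) + (a / s) * (s / N - 1)\<^sup>2"
proof -
  have "q = q * r - (q * r) * (r - 1) + q * (r - 1)\<^sup>2" for q r :: real
    by algebra
  moreover have "a / N = (a / s) * (s / N)"
    using assms by simp
  ultimately show ?thesis
    by metis
qed

lemma (in prob_space) abs_integral_le_of_expansion:
  fixes D G H :: "'a \<Rightarrow> real"
  assumes [measurable]: "D \<in> borel_measurable M" "G \<in> borel_measurable M" "H \<in> borel_measurable M"
    and "\<And>x. x \<in> space M \<Longrightarrow> \<bar>D x\<bar> \<le> C"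
    and "\<And>x. x \<in> space M \<Longrightarrow> \<bar>G x\<bar> \<le> B" "\<And>x. x \<in> space M \<Longrightarrow> \<bar>H x\<bar> \<le> B"
    and "AE x in M. D x = 2 * W * G x - 2 * W\<^sup>2 * (G x * H x) + W\<^sup>2 * (D x * (H x)\<^sup>2)"
    and "0 \<le> W"
  shows "\<bar>\<integral>x. D x \<partial>M\<bar>
    \<le> 2 * W * \<bar>\<integral>x. G x \<partial>M\<bar> + W\<^sup>2 * ((\<integral>x. (G x)\<^sup>2 \<partial>M) + (\<integral>x. (H x)\<^sup>2 \<partial>M)) + C * W\<^sup>2 * (\<integral>x. (H x)\<^sup>2 \<partial>M)"
proof -
  have GH: "\<bar>G x * H x\<bar> \<le> ((G x)\<^sup>2 + (H x)\<^sup>2) / 2" for x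
    using sum_squares_bound[of "\<bar>G x\<bar>" "\<bar>H x\<bar>"] by (simp add: abs_mult)
  have DH: "\<bar>D x * (H x)\<^sup>2\<bar> \<le> C * (H x)\<^sup>2" if "x \<in> space M" for x
    using mult_right_mono[OF assms(4)[OF that], of "(H x)\<^sup>2"] by (simp add: abs_mult)
  have abs_mult_le: "\<bar>a * b\<bar> \<le> K * L" if "\<bar>a\<bar> \<le> K" "\<bar>b\<bar> \<le> L" for a b K L :: real
    using mult_mono[OF that abs_ge_zero[THEN order_trans, OF that(1)] abs_ge_zero] by (simp add: abs_mult)
  have int_G: "integrable M G"
    using assms(5) by (intro integrable_const_bound[where B=B]) auto
  have int_GH: "integrable M (\<lambda>x. G x * H x)"
    using assms(5,6) by (intro integrable_const_bound[where B="B * B"]) (auto intro: abs_mult_le)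
  have G2: "\<bar>(G x)\<^sup>2\<bar> \<le> B * B" and H2: "\<bar>(H x)\<^sup>2\<bar> \<le> B * B" if "x \<in> space M" for x
    using abs_mult_le[OF assms(5)[OF that] assms(5)[OF that]] abs_mult_le[OF assms(6)[OF that] assms(6)[OF that]]
    by (simp_all add: power2_eq_square)
  have int_G2: "integrable M (\<lambda>x. (G x)\<^sup>2)" and int_H2: "integrable M (\<lambda>x. (H x)\<^sup>2)"
    using G2 H2 by (auto intro!: integrable_const_bound[where B="B * B"])
  have int_DH: "integrable M (\<lambda>x. D x * (H x)\<^sup>2)"
    using assms(4) H2 by (intro integrable_const_bound[where B="C * (B * B)"]) (auto intro!: abs_mult_le)
  have "(\<integral>x. D x \<partial>M) = (\<integral>x. 2 * W * G x - 2 * W\<^sup>2 * (G x * H x) + W\<^sup>2 * (D x * (H x)\<^sup>2) \<partial>M)"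
    using assms(7) by (rule integral_cong_AE[rotated 2]) simp_all
  also have "\<dots> = 2 * W * (\<integral>x. G x \<partial>M) - 2 * W\<^sup>2 * (\<integral>x. G x * H x \<partial>M) + W\<^sup>2 * (\<integral>x. D x * (H x)\<^sup>2 \<partial>M)"
    using int_G int_GH int_DH by simp
  finally have "\<bar>\<integral>x. D x \<partial>M\<bar>
      \<le> \<bar>2 * W * (\<integral>x. G x \<partial>M)\<bar> + \<bar>2 * W\<^sup>2 * (\<integral>x. G x * H x \<partial>M)\<bar> + \<bar>W\<^sup>2 * (\<integral>x. D x * (H x)\<^sup>2 \<partial>M)\<bar>"
    by linarith
  also have "\<dots> = 2 * W * \<bar>\<integral>x. G x \<partial>M\<bar> + W\<^sup>2 * (2 * \<bar>\<integral>x. G x * H x \<partial>M\<bar>) + W\<^sup>2 * \<bar>\<integral>x. D x * (H x)\<^sup>2 \<partial>M\<bar>"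
    using assms(8) by (simp add: abs_mult)
  also have "\<dots> \<le> 2 * W * \<bar>\<integral>x. G x \<partial>M\<bar> + W\<^sup>2 * ((\<integral>x. (G x)\<^sup>2 \<partial>M) + (\<integral>x. (H x)\<^sup>2 \<partial>M))
      + W\<^sup>2 * (C * (\<integral>x. (H x)\<^sup>2 \<partial>M))"
  proof (intro add_mono mult_left_mono order_refl)
    show "2 * \<bar>\<integral>x. G x * H x \<partial>M\<bar> \<le> (\<integral>x. (G x)\<^sup>2 \<partial>M) + (\<integral>x. (H x)\<^sup>2 \<partial>M)"
      using abs_integral_le_integral[OF int_GH _ GH] int_G2 int_H2 by simp
    show "\<bar>\<integral>x. D x * (H x)\<^sup>2 \<partial>M\<bar> \<le> C * (\<integral>x. (H x)\<^sup>2 \<partial>M)"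
      using abs_integral_le_integral[OF int_DH _ DH] int_H2 by simp
  qed (simp_all add: assms(8))
  finally show ?thesis
    by (simp add: algebra_simps)
qed

lemma self_normalised_error_expansion:
  fixes w f :: "'a \<Rightarrow> real"
  assumes "0 < W" "1 \<le> n" "0 < (\<Sum>j=1..n. w (Y j \<omega>))"
    and "(\<integral>x. w x * ((f x - c) / (2 * W)) \<partial>\<pi>Y) = 0" "(\<integral>x. w x / W \<partial>\<pi>Y) = 1 / W"
  defines "D \<equiv> (\<Sum>i=1..n. normalised_weight w Y n \<omega> i * f (Y i \<omega>)) - c"
    and "G \<equiv> emp_dev \<pi>Y Y n \<omega> (\<lambda>x. w x * ((f x - c) / (2 * W)))"
    and "H \<equiv> emp_dev \<pi>Y Y n \<omega> (\<lambda>x. w x / W)"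
  shows "D = 2 * W * G - 2 * W\<^sup>2 * (G * H) + W\<^sup>2 * (D * H\<^sup>2)"
proof -
  define s where "s = (\<Sum>j=1..n. w (Y j \<omega>))"
  define a where "a = (\<Sum>i=1..n. w (Y i \<omega>) * (f (Y i \<omega>) - c))"
  have "a = (\<Sum>i=1..n. w (Y i \<omega>) * f (Y i \<omega>)) - c * s"
    by (simp add: a_def s_def algebra_simps sum_subtractf sum_distrib_left)
  then have D: "D = a / s"
    using assms(3) by (simp add: D_def s_def normalised_weight_def field_simps flip: sum_divide_distrib)
  have G: "2 * W * G = a / n"
    using assms(1,4) by (simp add: G_def emp_dev_def a_def field_simps flip: sum_distrib_left sum_divide_distrib)
  have H: "W * H = s / n - 1"
    using assms(1,5) by (simp add: H_def emp_dev_def s_def field_simps flip: sum_divide_distrib)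
  have "D = 2 * W * G - (2 * W * G) * (W * H) + D * (W * H)\<^sup>2"
    unfolding D G H using assms(2,3) by (intro ratio_expansion) (simp_all add: s_def)
  then show ?thesis
    by (simp add: power_mult_distrib power2_eq_square algebra_simps)
qed

lemma integral_density_ratio:
  fixes p pY g :: "'a \<Rightarrow> real"
  assumes [measurable]: "p \<in> borel_measurable \<nu>" "pY \<in> borel_measurable \<nu>" "g \<in> borel_measurable \<nu>"
    and "\<And>x. 0 \<le> p x" "\<And>x. 0 \<le> pY x" "\<And>x. pY x = 0 \<Longrightarrow> p x = 0"
  shows "(\<integral>x. p x / pY x * g x \<partial>density \<nu> pY) = (\<integral>x. g x \<partial>density \<nu> p)"
proof -
  have "pY x * (p x / pY x * g x) = p x * g x" for x
    using assms(6)[of x] by (cases "pY x = 0") auto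
  then show ?thesis
    using assms(4,5) by (simp add: integral_density)
qed

lemma centred_weight_test_functions:
  fixes w f :: "'a::topological_space \<Rightarrow> real"
  assumes "prob_space \<pi>" "sets \<pi> = sets borel" "sets \<pi>Y = sets borel"
    and w: "w \<in> borel_measurable borel" "\<And>x. 0 \<le> w x" "\<And>x. w x \<le> W" "0 < W"
    and change_of_measure: "\<And>g. g \<in> borel_measurable borel \<Longrightarrow> (\<integral>x. w x * g x \<partial>\<pi>Y) = (\<integral>x. g x \<partial>\<pi>)"
    and f: "f \<in> borel_measurable borel" "\<And>x. \<bar>f x\<bar> \<le> 1"
    and c: "c = (\<integral>x. f x \<partial>\<pi>)"
  defines "g \<equiv> \<lambda>x. w x * ((f x - c) / (2 * W))"
    and "h \<equiv> \<lambda>x. w x / W"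
  shows "g \<in> unit_fns \<pi>Y" "(\<lambda>x. - g x) \<in> unit_fns \<pi>Y" "h \<in> unit_fns \<pi>Y"
    and "(\<integral>x. g x \<partial>\<pi>Y) = 0" "(\<integral>x. h x \<partial>\<pi>Y) = 1 / W"
proof -
  interpret \<pi>: prob_space \<pi> by fact
  have f_\<pi>: "f \<in> borel_measurable \<pi>"
    using f(1) by (simp add: measurable_cong_sets[OF assms(2) refl])
  have "\<bar>c\<bar> \<le> 1"
    unfolding c using \<pi>.abs_integral_le_const[OF f_\<pi>] f(2) by blast
  then have "w x * \<bar>f x - c\<bar> \<le> W * 2" for x
    using w(2,3)[of x] f(2)[of x] by (intro mult_mono) auto
  moreover have "\<bar>g x\<bar> = w x * \<bar>f x - c\<bar> / (2 * W)" for x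
    using w(2)[of x] \<open>0 < W\<close> by (simp add: g_def abs_mult abs_divide)
  ultimately have "\<bar>g x\<bar> \<le> 1" for x
    using \<open>0 < W\<close> by (simp add: mult.commute)
  moreover have "\<bar>h x\<bar> \<le> 1" for x
    using w(2,3)[of x] \<open>0 < W\<close> by (simp add: h_def)
  moreover have "g \<in> borel_measurable borel" "h \<in> borel_measurable borel"
    unfolding g_def h_def using w(1) f(1) by measurable
  ultimately show "g \<in> unit_fns \<pi>Y" "(\<lambda>x. - g x) \<in> unit_fns \<pi>Y" "h \<in> unit_fns \<pi>Y"
    by (simp_all add: unit_fns_def measurable_cong_sets[OF assms(3) refl])
  have "integrable \<pi> f"
    using f f_\<pi> by (intro \<pi>.integrable_const_bound[where B=1]) auto
  then have "(\<integral>x. f x - c \<partial>\<pi>) = 0"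
    by (subst Bochner_Integration.integral_diff) (auto simp: c \<pi>.prob_space)
  then show "(\<integral>x. g x \<partial>\<pi>Y) = 0"
    using change_of_measure[of "\<lambda>x. (f x - c) / (2 * W)"] f(1) by (simp add: g_def)
  show "(\<integral>x. h x \<partial>\<pi>Y) = 1 / W"
    using change_of_measure[of "\<lambda>_. 1 / W"] by (simp add: h_def \<pi>.prob_space)
qed

lemma abs_integral_eta_diff_le:
  fixes w f :: "'a::topological_space \<Rightarrow> real"
  assumes "prob_space P" "prob_space \<pi>" "prob_space \<pi>Y" "sets \<pi> = sets borel" "sets \<pi>Y = sets borel"
    and Y: "\<And>i. Y i \<in> measurable P borel"
    and w: "w \<in> borel_measurable borel" "\<And>x. 0 \<le> w x" "\<And>x. w x \<le> W"
    and change_of_measure: "\<And>g. g \<in> borel_measurable borel \<Longrightarrow> (\<integral>x. w x * g x \<partial>\<pi>Y) = (\<integral>x. g x \<partial>\<pi>)"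
    and "1 \<le> n" "AE \<omega> in P. 0 < (\<Sum>j=1..n. w (Y j \<omega>))" "0 < W"
    and f: "f \<in> borel_measurable borel" "\<And>x. \<bar>f x\<bar> \<le> 1"
  shows "\<bar>(\<integral>x. f x \<partial>eta P w Y n) - (\<integral>x. f x \<partial>\<pi>)\<bar>
    \<le> 2 * W * (SUP g\<in>unit_fns \<pi>Y. \<integral>\<omega>. emp_dev \<pi>Y Y n \<omega> g \<partial>P)
      + 4 * W\<^sup>2 * (SUP g\<in>unit_fns \<pi>Y. \<integral>\<omega>. (emp_dev \<pi>Y Y n \<omega> g)\<^sup>2 \<partial>P)"
    (is "_ \<le> 2 * W * ?S1 + 4 * W\<^sup>2 * ?S2")
proof -
  interpret P: prob_space P by fact
  define c where "c = (\<integral>x. f x \<partial>\<pi>)"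
  define g where "g x = w x * ((f x - c) / (2 * W))" for x
  define h where "h x = w x / W" for x
  define D where "D \<omega> = (\<Sum>i=1..n. normalised_weight w Y n \<omega> i * f (Y i \<omega>)) - c" for \<omega>
  define G where "G \<omega> = emp_dev \<pi>Y Y n \<omega> g" for \<omega>
  define H where "H \<omega> = emp_dev \<pi>Y Y n \<omega> h" for \<omega>
  have unit: "g \<in> unit_fns \<pi>Y" "(\<lambda>x. - g x) \<in> unit_fns \<pi>Y" "h \<in> unit_fns \<pi>Y"
    and integral_g: "(\<integral>x. g x \<partial>\<pi>Y) = 0" and integral_h: "(\<integral>x. h x \<partial>\<pi>Y) = 1 / W"
    using centred_weight_test_functions[OF assms(2,4,5) w \<open>0 < W\<close> change_of_measure f c_def]
    unfolding g_def[abs_def] h_def[abs_def] by simp_all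
  have g_h_measurable: "g \<in> borel_measurable borel" "h \<in> borel_measurable borel"
    unfolding g_def[abs_def] h_def[abs_def] using w(1) f(1) by measurable
  have "\<bar>c\<bar> \<le> 1"
    unfolding c_def using prob_space.abs_integral_le_const[OF assms(2)] f assms(4)
    by (simp add: measurable_cong_sets[OF assms(4) refl])
  have expansion: "AE \<omega> in P. D \<omega> = 2 * W * G \<omega> - 2 * W\<^sup>2 * (G \<omega> * H \<omega>) + W\<^sup>2 * (D \<omega> * (H \<omega>)\<^sup>2)"
    using assms(12) unfolding D_def G_def H_def
    by eventually_elim
      (rule self_normalised_error_expansion[OF \<open>0 < W\<close> \<open>1 \<le> n\<close> _ integral_g[unfolded g_def]
        integral_h[unfolded h_def], folded g_def h_def])
  have D_bound: "\<bar>D \<omega>\<bar> \<le> 2" for \<omega>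
  proof -
    have "\<bar>\<Sum>i=1..n. normalised_weight w Y n \<omega> i * f (Y i \<omega>)\<bar> \<le> 1"
      by (rule abs_weighted_average_le_1) (simp_all add: w(2) f(2))
    then show ?thesis
      using \<open>\<bar>c\<bar> \<le> 1\<close> unfolding D_def by linarith
  qed
  have D_measurable: "D \<in> borel_measurable P"
    unfolding D_def normalised_weight_def using Y w(1) f(1) by measurable
  have space_\<pi>Y: "space \<pi>Y = UNIV"
    using sets_eq_imp_space_eq[OF assms(5)] by simp
  have "\<bar>\<integral>\<omega>. D \<omega> \<partial>P\<bar> \<le> 2 * W * \<bar>\<integral>\<omega>. G \<omega> \<partial>P\<bar>
      + W\<^sup>2 * ((\<integral>\<omega>. (G \<omega>)\<^sup>2 \<partial>P) + (\<integral>\<omega>. (H \<omega>)\<^sup>2 \<partial>P)) + 2 * W\<^sup>2 * (\<integral>\<omega>. (H \<omega>)\<^sup>2 \<partial>P)"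
    using \<open>0 < W\<close> D_bound unit space_\<pi>Y g_h_measurable
    unfolding G_def H_def
    by (intro P.abs_integral_le_of_expansion[where B=2] expansion[unfolded G_def H_def] D_measurable
        measurable_emp_dev[OF Y] abs_emp_dev_le_2[OF assms(3)]) simp_all
  moreover have "\<bar>\<integral>\<omega>. G \<omega> \<partial>P\<bar> \<le> ?S1"
    using integral_emp_dev_le_SUP(1)[where Y=Y and n=n, OF assms(1,3,5) Y unit(1)] integral_emp_dev_le_SUP(1)[where Y=Y and n=n, OF assms(1,3,5) Y unit(2)]
    by (simp add: G_def emp_dev_uminus)
  moreover have "(\<integral>\<omega>. (G \<omega>)\<^sup>2 \<partial>P) \<le> ?S2" "(\<integral>\<omega>. (H \<omega>)\<^sup>2 \<partial>P) \<le> ?S2"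
    unfolding G_def H_def using integral_emp_dev_sq_le_SUP[where Y=Y and n=n, OF assms(1,3,5) Y] unit by simp_all
  ultimately have "\<bar>\<integral>\<omega>. D \<omega> \<partial>P\<bar> \<le> 2 * W * ?S1 + W\<^sup>2 * (?S2 + ?S2) + 2 * W\<^sup>2 * ?S2"
    using \<open>0 < W\<close> by (smt (verit) mult_left_mono zero_le_power2)
  then show ?thesis
    using integral_eta_minus_const[where Y=Y and n=n and w=w and c=c, OF assms(1) Y w(1,2) f]
    by (simp add: D_def c_def algebra_simps)
qed

lemma tv_dist_le:
  assumes "\<And>f. f \<in> unit_fns M \<Longrightarrow> \<bar>(\<integral>x. f x \<partial>M) - (\<integral>x. f x \<partial>N)\<bar> \<le> 2 * B"
  shows "tv_dist M N \<le> B"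
proof -
  have "(\<lambda>_. 0) \<in> unit_fns M"
    by (simp add: unit_fns_def)
  then have "(SUP f\<in>unit_fns M. \<bar>(\<integral>x. f x \<partial>M) - (\<integral>x. f x \<partial>N)\<bar>) \<le> 2 * B"
    by (intro cSUP_least assms) auto
  then show ?thesis
    by (simp add: tv_dist_def)
qed

theorem lemma1:
  fixes \<nu> :: "'a::polish_space measure"
    and p pY :: "'a \<Rightarrow> real"
    and P :: "'b measure"
    and Y :: "nat \<Rightarrow> 'b \<Rightarrow> 'a"
    and y0 :: 'a
    and n :: nat
  defines "w \<equiv> (\<lambda>x. p x / pY x)"
    and "wsup \<equiv> (SUP x. \<bar>p x / pY x\<bar>)"
    and "\<pi> \<equiv> density \<nu> (\<lambda>x. ennreal (p x))"
    and "\<pi>Y \<equiv> density \<nu> (\<lambda>x. ennreal (pY x))"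
  assumes "sets \<nu> = sets borel"
    and "sigma_finite_measure \<nu>"
    and "p \<in> borel_measurable borel" and "pY \<in> borel_measurable borel"
    and "\<And>x. p x \<ge> 0" and "\<And>x. pY x \<ge> 0"
    and "prob_space \<pi>" and "prob_space \<pi>Y"
    and "\<And>x. pY x = 0 \<Longrightarrow> p x = 0"
    and "bdd_above (range (\<lambda>x. \<bar>w x\<bar>))"
    and "prob_space P"
    and "\<And>i. Y i \<in> measurable P borel"
    and "\<And>\<omega>. \<omega> \<in> space P \<Longrightarrow> Y 0 \<omega> = y0"
    and "n \<ge> 1"
    and "AE \<omega> in P. (\<Sum>j=1..n. w (Y j \<omega>)) > 0"
  shows "tv_dist (eta P w Y n) \<pi>
     \<le> wsup * (SUP f \<in> unit_fns \<pi>Y. \<integral>\<omega>. emp_dev \<pi>Y Y n \<omega> f \<partial>P)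
       + 2 * wsup\<^sup>2 * (SUP f \<in> unit_fns \<pi>Y. \<integral>\<omega>. (emp_dev \<pi>Y Y n \<omega> f)\<^sup>2 \<partial>P)"
proof (rule tv_dist_le)
  have sets: "sets \<pi> = sets borel" "sets \<pi>Y = sets borel"
    by (simp_all add: \<pi>_def \<pi>Y_def assms(5))
  have w_measurable: "w \<in> borel_measurable borel"
    unfolding w_def using assms(7,8) by measurable
  have w_nonneg: "0 \<le> w x" for x
    unfolding w_def using assms(9,10) by simp
  have w_le: "w x \<le> wsup" for x
    using cSUP_upper[OF UNIV_I assms(14), of x] abs_ge_self[of "w x"] unfolding wsup_def w_def by linarith
  have "0 < wsup"
  proof (rule ccontr)
    assume "\<not> 0 < wsup"
    then have "w x = 0" for x
      using w_le[of x] w_nonneg[of x] by linarith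
    then show False
      using assms(19) prob_space.AE_False[OF assms(15)] by simp
  qed
  have change_of_measure: "(\<integral>x. w x * g x \<partial>\<pi>Y) = (\<integral>x. g x \<partial>\<pi>)" if "g \<in> borel_measurable borel" for g
    unfolding w_def \<pi>_def \<pi>Y_def using that assms(7-10,13)
    by (intro integral_density_ratio) (simp_all add: measurable_cong_sets[OF assms(5) refl])
  fix f assume "f \<in> unit_fns (eta P w Y n)"
  then have "f \<in> borel_measurable borel" "\<And>x. \<bar>f x\<bar> \<le> 1"
    by (simp_all add: unit_fns_def measurable_cong_sets[OF sets_eta refl])
  then show "\<bar>(\<integral>x. f x \<partial>eta P w Y n) - (\<integral>x. f x \<partial>\<pi>)\<bar>
      \<le> 2 * (wsup * (SUP f \<in> unit_fns \<pi>Y. \<integral>\<omega>. emp_dev \<pi>Y Y n \<omega> f \<partial>P)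
        + 2 * wsup\<^sup>2 * (SUP f \<in> unit_fns \<pi>Y. \<integral>\<omega>. (emp_dev \<pi>Y Y n \<omega> f)\<^sup>2 \<partial>P))"
    using abs_integral_eta_diff_le[OF assms(15,11,12) sets assms(16) w_measurable w_nonneg w_le
        change_of_measure assms(18,19) \<open>0 < wsup\<close>]
    by (simp add: algebra_simps)
qed

end
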